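(* Let $\mathbf p$ be a reproduction law with $p_0=0$, $p_1<1$, let $\Gamma$ take values in $(1,\infty)$, and let $T$ be a $(\Gamma,\mathbf p)$-Galton–Watson tree with recursive lengths. Let $\phi$ and $\kappa$ be as defined below. Assume that $\mathbb E[\kappa(\phi(T))]$ and $\sum_{k\ge1}p_kk$ are finite. Then $\mathbb E[-\log(1-\Gamma_\varnothing^{-1})\,\kappa(\phi(T))]$ is finite if and only if $\mathbb E[-\log(1-\Gamma_\varnothing^{-1})]$ is finite.
   Context: Trees are leafless rooted planar trees encoded by finite words, root $\varnothing$, with an artificial parent $\varnothing_*$ of the root; a $(\Gamma,\mathbf p)$-Galton–Watson tree carries i.i.d. marks $\Gamma_x$. The random walk on $T\cup\{\varnothing_*\}$ goes from $\varnothing_*$ to $\varnothing$ with probability 1, and from $x$ to child $xi$ with probability $\Gamma_{xi}/(\Gamma_x-1+\sum_j\Gamma_{xj})$ and to its parent with probability $(\Gamma_x-1)/(\Gamma_x-1+\sum_j\Gamma_{xj})$. $\beta(T)$ is the probability that this walk started at $\varnothing$ never hits $\varnothing_*$, $\phi(T)=\Gamma_\varnothing\beta(T)$, and for $u>1$, $\kappa(u)=\mathbb E[uS/(u-1+S)]$ with $S=\sum_{j=1}^{\nu_{\tilde T}(\varnothing)}\phi(\tilde T[j])$, $\tilde T$ an independent copy of $T$. *)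

theory Defs
  imports "HOL-Probability.Probability"
begin

text \<open>Vertices are Ulam--Harris words (nat lists); the children of x are x@[j], j < N x.
  The artificial parent of the root is represented by None, vertex x by Some x.
  A marked tree is given by the offspring function N and the mark function G.\<close>

text \<open>Probability that the walk started at v hits the artificial parent within n steps.\<close>
fun hitp :: "(nat list \<Rightarrow> nat) \<Rightarrow> (nat list \<Rightarrow> real) \<Rightarrow> nat \<Rightarrow> nat list option \<Rightarrow> real" where
  "hitp N G 0 v = (if v = None then 1 else 0)"
| "hitp N G (Suc n) None = 1"
| "hitp N G (Suc n) (Some x) =
     (let D = G x - 1 + (\<Sum>j<N x. G (x @ [j]))
      in (G x - 1) / D * hitp N G n (if x = [] then None else Some (butlast x))
         + (\<Sum>j<N x. G (x @ [j]) / D * hitp N G n (Some (x @ [j]))))"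

text \<open>beta(T): probability that the walk started at the root never hits the artificial parent
  (= 1 - limit of the probabilities of hitting it within n steps).\<close>
definition beta_tree :: "(nat list \<Rightarrow> nat) \<Rightarrow> (nat list \<Rightarrow> real) \<Rightarrow> real" where
  "beta_tree N G = 1 - (SUP n. hitp N G n (Some []))"

definition phi_tree :: "(nat list \<Rightarrow> nat) \<Rightarrow> (nat list \<Rightarrow> real) \<Rightarrow> real" where
  "phi_tree N G = G [] * beta_tree N G"

text \<open>S = sum over the children j of the root of phi(T[j]); T[j] is the subtree rooted at [j].\<close>
definition S_tree :: "(nat list \<Rightarrow> nat) \<Rightarrow> (nat list \<Rightarrow> real) \<Rightarrow> real" where
  "S_tree N G = (\<Sum>j<N []. phi_tree (\<lambda>x. N (j # x)) (\<lambda>x. G (j # x)))"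

definition GW_tree :: "'a measure \<Rightarrow> nat pmf \<Rightarrow> real measure \<Rightarrow>
    (nat list \<Rightarrow> 'a \<Rightarrow> nat) \<Rightarrow> (nat list \<Rightarrow> 'a \<Rightarrow> real) \<Rightarrow> bool" where
  "GW_tree M p mu Nv Gam \<longleftrightarrow>
     prob_space M \<and>
     prob_space.indep_vars M (\<lambda>_. count_space UNIV \<Otimes>\<^sub>M borel) (\<lambda>x \<omega>. (Nv x \<omega>, Gam x \<omega>)) UNIV \<and>
     (\<forall>x. distr M (count_space UNIV \<Otimes>\<^sub>M borel) (\<lambda>\<omega>. (Nv x \<omega>, Gam x \<omega>)) = measure_pmf p \<Otimes>\<^sub>M mu)"

text \<open>kappa(u) = E[u S / (u - 1 + S)], S computed on an independent copy of T (only its law matters).\<close>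
definition kappa :: "'a measure \<Rightarrow> (nat list \<Rightarrow> 'a \<Rightarrow> nat) \<Rightarrow> (nat list \<Rightarrow> 'a \<Rightarrow> real) \<Rightarrow> real \<Rightarrow> ennreal" where
  "kappa M Nv Gam u = (\<integral>\<^sup>+ \<omega>. ennreal (u * S_tree (\<lambda>x. Nv x \<omega>) (\<lambda>x. Gam x \<omega>)
        / (u - 1 + S_tree (\<lambda>x. Nv x \<omega>) (\<lambda>x. Gam x \<omega>))) \<partial>M)"

end

theory Submission
  imports Defs
begin

text \<open>Almost surely every vertex has a child and every mark exceeds 1. Then the product of
  the factors 1 - 1/\<Gamma> along the path from the root to a vertex is a superharmonic function
  of the walk which equals 1 at the artificial parent, so it dominates the probability of hitting
  that parent; at the root this gives \<beta>(T) \<ge> 1/\<Gamma>(\<emptyset>), i.e. 1 \<le> \<phi>(T) \<le> \<Gamma>(\<emptyset>).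
  Likewise S \<ge> 1, whence 1 \<le> \<kappa>(u) \<le> u for u \<ge> 1. With L = -log(1 - 1/\<Gamma>(\<emptyset>)) this
  squeezes L \<kappa>(\<phi>(T)) between L and \<Gamma>(\<emptyset>) L \<le> L + 1, so the two expectations are finite
  together.\<close>

definition path_weight :: "(nat list \<Rightarrow> real) \<Rightarrow> nat list option \<Rightarrow> real" where
  "path_weight G v = (case v of None \<Rightarrow> 1 | Some x \<Rightarrow> (\<Prod>k\<le>length x. 1 - 1 / G (take k x)))"

lemma path_weight_snoc:
  "path_weight G (Some (x @ [j])) = (1 - 1 / G (x @ [j])) * path_weight G (Some x)"
proof -
  have "(\<Prod>k\<le>length x. 1 - 1 / G (take k (x @ [j]))) = (\<Prod>k\<le>length x. 1 - 1 / G (take k x))"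
    by (intro prod.cong) auto
  then show ?thesis
    by (simp add: path_weight_def prod.atMost_Suc)
qed

lemma path_weight_Some:
  "path_weight G (Some x) = (1 - 1 / G x) * path_weight G (if x = [] then None else Some (butlast x))"
proof (cases x rule: rev_cases)
  case Nil
  then show ?thesis by (simp add: path_weight_def)
next
  case (snoc y j)
  then show ?thesis by (simp add: path_weight_snoc)
qed

lemma path_weight_pos:
  assumes "\<And>x. 1 < G x"
  shows "0 < path_weight G v"
proof -
  have "0 < 1 - 1 / G x" for x
    using assms[of x] by (simp add: field_simps)
  then show ?thesis
    by (auto simp: path_weight_def prod_pos split: option.split)
qed

lemma path_weight_superharmonic:
  assumes "1 \<le> N x" and "\<And>y. 1 < G y"
  shows "(G x - 1) * path_weight G (if x = [] then None else Some (butlast x))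
           + (\<Sum>j<N x. G (x @ [j]) * path_weight G (Some (x @ [j])))
         \<le> (G x - 1 + (\<Sum>j<N x. G (x @ [j]))) * path_weight G (Some x)"
proof -
  define P where "P = path_weight G (Some x)"
  have parent: "(G x - 1) * path_weight G (if x = [] then None else Some (butlast x)) = G x * P"
    using assms(2)[of x] path_weight_Some[of G x] by (simp add: P_def field_simps)
  have child: "G (x @ [j]) * path_weight G (Some (x @ [j])) = (G (x @ [j]) - 1) * P" for j
    using assms(2)[of "x @ [j]"] by (simp add: P_def path_weight_snoc field_simps)
  have "G x * P + (\<Sum>j<N x. (G (x @ [j]) - 1) * P)
        = (G x - real (N x) + (\<Sum>j<N x. G (x @ [j]))) * P"
    by (simp add: sum_distrib_left sum_distrib_right sum_subtractf algebra_simps)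
  also have "\<dots> \<le> (G x - 1 + (\<Sum>j<N x. G (x @ [j]))) * P"
    using assms(1) path_weight_pos[of G, OF assms(2)]
    by (intro mult_right_mono) (auto simp: P_def less_imp_le)
  finally show ?thesis
    by (simp add: parent child P_def)
qed

lemma hitp_le_path_weight:
  assumes "\<And>x. 1 \<le> N x" and "\<And>x. 1 < G x"
  shows "hitp N G n v \<le> path_weight G v"
proof (induction n arbitrary: v)
  case 0
  then show ?case
    using path_weight_pos[of G, OF assms(2)] by (simp add: path_weight_def less_imp_le)
next
  case (Suc n)
  show ?case
  proof (cases v)
    case None
    then show ?thesis by (simp add: path_weight_def)
  next
    case (Some x)
    define par where "par = (if x = [] then None else Some (butlast x))"
    define D where "D = G x - 1 + (\<Sum>j<N x. G (x @ [j]))"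
    have G0: "0 \<le> G y" for y
      using assms(2)[of y] by simp
    have "0 < D"
      using assms(2)[of x] sum_nonneg[of "{..<N x}" "\<lambda>j. G (x @ [j])"] G0 by (simp add: D_def)
    have "hitp N G (Suc n) v
          = (G x - 1) / D * hitp N G n par + (\<Sum>j<N x. G (x @ [j]) / D * hitp N G n (Some (x @ [j])))"
      by (simp add: Some Let_def D_def par_def)
    also have "\<dots> \<le> (G x - 1) / D * path_weight G par
                    + (\<Sum>j<N x. G (x @ [j]) / D * path_weight G (Some (x @ [j])))"
      using Suc.IH assms(2)[of x] G0 \<open>0 < D\<close>
      by (intro add_mono mult_left_mono sum_mono) auto
    also have "\<dots> = ((G x - 1) * path_weight G par
                    + (\<Sum>j<N x. G (x @ [j]) * path_weight G (Some (x @ [j])))) / D"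
      by (simp add: add_divide_distrib sum_divide_distrib)
    also have "\<dots> \<le> path_weight G v"
      using path_weight_superharmonic[of N x G, OF assms(1) assms(2)] \<open>0 < D\<close>
      by (simp add: Some divide_le_eq D_def par_def mult.commute)
    finally show ?thesis .
  qed
qed

lemma beta_tree_bounds:
  assumes "\<And>x. 1 \<le> N x" and "\<And>x. 1 < G x"
  shows "1 / G [] \<le> beta_tree N G" and "beta_tree N G \<le> 1"
proof -
  have hit_le: "hitp N G n (Some []) \<le> 1 - 1 / G []" for n
    using hitp_le_path_weight[of N G n "Some []", OF assms] by (simp add: path_weight_def)
  then have "(SUP n. hitp N G n (Some [])) \<le> 1 - 1 / G []"
    by (intro cSUP_least) auto
  then show "1 / G [] \<le> beta_tree N G"
    by (simp add: beta_tree_def)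
  have "bdd_above (range (\<lambda>n. hitp N G n (Some [])))"
    using hit_le by (intro bdd_aboveI2) auto
  then have "hitp N G 0 (Some []) \<le> (SUP n. hitp N G n (Some []))"
    by (rule cSUP_upper[OF UNIV_I])
  then show "beta_tree N G \<le> 1"
    by (simp add: beta_tree_def)
qed

lemma phi_tree_bounds:
  assumes "\<And>x. 1 \<le> N x" and "\<And>x. 1 < G x"
  shows "1 \<le> phi_tree N G" and "phi_tree N G \<le> G []"
  using beta_tree_bounds[of N G, OF assms] assms(2)[of "[]"]
  by (simp_all add: phi_tree_def field_simps)

lemma S_tree_ge_1:
  assumes "\<And>x. 1 \<le> N x" and "\<And>x. 1 < G x"
  shows "1 \<le> S_tree N G"
proof -
  have "(\<Sum>j<N []. 1) \<le> S_tree N G"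
    unfolding S_tree_def using assms by (intro sum_mono phi_tree_bounds(1))
  then show ?thesis
    using assms(1)[of "[]"] by simp
qed

lemma kappa_integrand_bounds:
  fixes u s :: real
  assumes "1 \<le> u" and "1 \<le> s"
  shows "1 \<le> u * s / (u - 1 + s)" and "u * s / (u - 1 + s) \<le> u"
proof -
  have "0 \<le> (u - 1) * (s - 1)"
    using assms by simp
  then show "1 \<le> u * s / (u - 1 + s)"
    using assms by (simp add: le_divide_eq algebra_simps)
  show "u * s / (u - 1 + s) \<le> u"
    using assms by (simp add: divide_le_eq)
qed

lemma kappa_bounds:
  assumes "prob_space M" and "AE \<omega> in M. 1 \<le> S_tree (\<lambda>x. Nv x \<omega>) (\<lambda>x. Gam x \<omega>)" and "1 \<le> u"
  shows "1 \<le> kappa M Nv Gam u" and "kappa M Nv Gam u \<le> ennreal u"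
proof -
  interpret prob_space M by fact
  have "(\<integral>\<^sup>+ \<omega>. 1 \<partial>M) \<le> kappa M Nv Gam u"
    unfolding kappa_def using assms(2)
    by (intro nn_integral_mono_AE)
      (auto elim!: eventually_mono simp: kappa_integrand_bounds(1)[OF assms(3)])
  then show "1 \<le> kappa M Nv Gam u"
    by (simp add: emeasure_space_1)
  have "kappa M Nv Gam u \<le> (\<integral>\<^sup>+ \<omega>. ennreal u \<partial>M)"
    unfolding kappa_def using assms(2)
    by (intro nn_integral_mono_AE)
      (auto elim!: eventually_mono intro!: ennreal_leI simp: kappa_integrand_bounds(2)[OF assms(3)])
  then show "kappa M Nv Gam u \<le> ennreal u"
    by (simp add: emeasure_space_1)
qed

lemma mult_neg_ln_one_minus_inverse_le:
  fixes t :: real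
  assumes "1 < t"
  shows "(t - 1) * - ln (1 - 1 / t) \<le> 1"
proof -
  have "- ln (1 - 1 / t) = ln (1 / (1 - 1 / t))"
    using assms by (simp add: ln_div)
  also have "\<dots> \<le> 1 / (1 - 1 / t) - 1"
    using assms by (intro ln_le_minus_one) (simp add: field_simps)
  also have "\<dots> = 1 / (t - 1)"
    using assms by (simp add: field_simps)
  finally show ?thesis
    using assms by (simp add: field_simps mult.commute)
qed

lemma ennreal_neg_ln_one_minus_inverse_mult_le:
  fixes t :: real
  assumes "1 < t" and "k \<le> ennreal t"
  shows "ennreal (- ln (1 - 1 / t)) * k \<le> ennreal (- ln (1 - 1 / t)) + 1"
proof -
  have L_nonneg: "0 \<le> - ln (1 - 1 / t)" and t_nonneg: "0 \<le> t"
    using assms(1) by simp_all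
  have "ennreal (- ln (1 - 1 / t)) * k \<le> ennreal (- ln (1 - 1 / t)) * ennreal t"
    using assms(2) by (rule mult_left_mono) simp
  also have "\<dots> = ennreal (- ln (1 - 1 / t) * t)"
    by (rule ennreal_mult[OF L_nonneg t_nonneg, symmetric])
  also have "\<dots> \<le> ennreal (- ln (1 - 1 / t) + 1)"
    using mult_neg_ln_one_minus_inverse_le[OF assms(1)] by (intro ennreal_leI) (simp add: algebra_simps)
  also have "\<dots> = ennreal (- ln (1 - 1 / t)) + 1"
    using ennreal_plus[OF L_nonneg zero_le_one] by simp
  finally show ?thesis .
qed

lemma (in prob_space) nn_integral_mult_finite_iff:
  fixes f g :: "'a \<Rightarrow> ennreal"
  assumes "f \<in> borel_measurable M"
    and "AE \<omega> in M. 1 \<le> g \<omega>" and "AE \<omega> in M. f \<omega> * g \<omega> \<le> f \<omega> + 1"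
  shows "(\<integral>\<^sup>+ \<omega>. f \<omega> * g \<omega> \<partial>M) < \<infinity> \<longleftrightarrow> (\<integral>\<^sup>+ \<omega>. f \<omega> \<partial>M) < \<infinity>"
proof
  have "(\<integral>\<^sup>+ \<omega>. f \<omega> * 1 \<partial>M) \<le> (\<integral>\<^sup>+ \<omega>. f \<omega> * g \<omega> \<partial>M)"
  proof (intro nn_integral_mono_AE eventually_mono[OF assms(2)])
    show "f \<omega> * 1 \<le> f \<omega> * g \<omega>" if "1 \<le> g \<omega>" for \<omega>
      using that by (rule mult_left_mono) simp
  qed
  then show "(\<integral>\<^sup>+ \<omega>. f \<omega> \<partial>M) < \<infinity>" if "(\<integral>\<^sup>+ \<omega>. f \<omega> * g \<omega> \<partial>M) < \<infinity>"
    using that by simp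
next
  assume "(\<integral>\<^sup>+ \<omega>. f \<omega> \<partial>M) < \<infinity>"
  have "(\<integral>\<^sup>+ \<omega>. f \<omega> * g \<omega> \<partial>M) \<le> (\<integral>\<^sup>+ \<omega>. f \<omega> + 1 \<partial>M)"
    using assms(3) by (rule nn_integral_mono_AE)
  also have "\<dots> = (\<integral>\<^sup>+ \<omega>. f \<omega> \<partial>M) + 1"
    using assms(1) by (simp add: nn_integral_add emeasure_space_1)
  also have "\<dots> < \<infinity>"
    using \<open>(\<integral>\<^sup>+ \<omega>. f \<omega> \<partial>M) < \<infinity>\<close> by simp
  finally show "(\<integral>\<^sup>+ \<omega>. f \<omega> * g \<omega> \<partial>M) < \<infinity>" .
qed

lemma emeasure_pair_measure_le:
  "emeasure (A \<Otimes>\<^sub>M B) X \<le> (\<integral>\<^sup>+ x. \<integral>\<^sup>+ y. indicator X (x, y) \<partial>B \<partial>A)"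
  by (simp add: pair_measure_def emeasure_measure_of_conv)

text \<open>Unlike the library's AE_pair_measure, no sigma-finiteness is needed: the pair measure
  never exceeds the iterated integral, even where it is not given by it.\<close>
lemma AE_pair_measureI:
  assumes "{z \<in> space (A \<Otimes>\<^sub>M B). P z} \<in> sets (A \<Otimes>\<^sub>M B)"
    and "AE x in A. AE y in B. P (x, y)"
  shows "AE z in A \<Otimes>\<^sub>M B. P z"
proof (rule AE_I')
  let ?N = "{z \<in> space (A \<Otimes>\<^sub>M B). \<not> P z}"
  have "emeasure (A \<Otimes>\<^sub>M B) ?N \<le> (\<integral>\<^sup>+ x. \<integral>\<^sup>+ y. indicator ?N (x, y) \<partial>B \<partial>A)"
    by (rule emeasure_pair_measure_le)
  also have "\<dots> = (\<integral>\<^sup>+ x. 0 \<partial>A)"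
  proof (intro nn_integral_cong_AE eventually_mono[OF assms(2)])
    fix x
    assume "AE y in B. P (x, y)"
    then have "(\<integral>\<^sup>+ y. indicator ?N (x, y) \<partial>B) = (\<integral>\<^sup>+ y. 0 \<partial>B)"
      by (intro nn_integral_cong_AE) (auto elim!: eventually_mono simp: indicator_def)
    then show "(\<integral>\<^sup>+ y. indicator ?N (x, y) \<partial>B) = 0"
      by simp
  qed
  finally show "?N \<in> null_sets (A \<Otimes>\<^sub>M B)"
    using sets.sets_Collect_neg[OF assms(1)] by (simp add: null_sets_def)
qed simp

lemma GW_tree_measurable:
  assumes "GW_tree M p mu Nv Gam"
  shows "(\<lambda>\<omega>. (Nv x \<omega>, Gam x \<omega>)) \<in> measurable M (count_space UNIV \<Otimes>\<^sub>M borel)"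
  using assms by (auto simp: GW_tree_def prob_space.indep_vars_def2)

lemma GW_tree_AE_offspring_marks:
  assumes GW: "GW_tree M p mu Nv Gam" and "pmf p 0 = 0" and "AE g in mu. 1 < g"
  shows "AE \<omega> in M. \<forall>x. 1 \<le> Nv x \<omega> \<and> 1 < Gam x \<omega>"
proof -
  let ?S = "count_space UNIV \<Otimes>\<^sub>M borel :: (nat \<times> real) measure"
  let ?good = "{z \<in> space ?S. 1 \<le> fst z \<and> 1 < snd z}"
  have law: "distr M ?S (\<lambda>\<omega>. (Nv x \<omega>, Gam x \<omega>)) = measure_pmf p \<Otimes>\<^sub>M mu" for x
    using GW by (simp add: GW_tree_def)
  have sets_law: "sets (measure_pmf p \<Otimes>\<^sub>M mu) = sets ?S"
    using law[of "[]"] by (metis sets_distr)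
  have "AE x in measure_pmf p. x \<noteq> 0"
    using assms(2) by (auto simp: AE_measure_pmf_iff set_pmf_iff intro: gr0I)
  then have "AE x in measure_pmf p. AE y in mu. 1 \<le> x \<and> 1 < y"
    using assms(3) by (auto elim!: eventually_mono)
  moreover have "?good \<in> sets ?S"
    by measurable
  ultimately have "AE z in measure_pmf p \<Otimes>\<^sub>M mu. 1 \<le> fst z \<and> 1 < snd z"
    using sets_eq_imp_space_eq[OF sets_law] sets_law by (intro AE_pair_measureI) auto
  then have "AE z in distr M ?S (\<lambda>\<omega>. (Nv x \<omega>, Gam x \<omega>)). 1 \<le> fst z \<and> 1 < snd z" for x
    unfolding law .
  then have "AE \<omega> in M. 1 \<le> Nv x \<omega> \<and> 1 < Gam x \<omega>" for x
    by (subst (asm) AE_distr_iff[OF GW_tree_measurable[OF GW] \<open>?good \<in> sets ?S\<close>]) simp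
  then show ?thesis
    by (simp add: AE_all_countable)
qed

theorem mainTheorem7:
  fixes M :: "'a measure" and p :: "nat pmf" and mu :: "real measure"
    and Nv :: "nat list \<Rightarrow> 'a \<Rightarrow> nat" and Gam :: "nat list \<Rightarrow> 'a \<Rightarrow> real"
  assumes GW: "GW_tree M p mu Nv Gam"
    and p0: "pmf p 0 = 0" and p1: "pmf p 1 < 1"
    and Gam_gt1: "AE g in mu. 1 < g"
    and kappa_fin: "(\<integral>\<^sup>+ \<omega>. kappa M Nv Gam (phi_tree (\<lambda>x. Nv x \<omega>) (\<lambda>x. Gam x \<omega>)) \<partial>M) < \<infinity>"
    and mean_fin: "(\<integral>\<^sup>+ k. ennreal (real k) \<partial>measure_pmf p) < \<infinity>"
  shows "(\<integral>\<^sup>+ \<omega>. ennreal (- ln (1 - 1 / Gam [] \<omega>))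
              * kappa M Nv Gam (phi_tree (\<lambda>x. Nv x \<omega>) (\<lambda>x. Gam x \<omega>)) \<partial>M) < \<infinity>
         \<longleftrightarrow> (\<integral>\<^sup>+ \<omega>. ennreal (- ln (1 - 1 / Gam [] \<omega>)) \<partial>M) < \<infinity>"
proof -
  interpret prob_space M
    using GW by (simp add: GW_tree_def)
  have regular: "AE \<omega> in M. \<forall>x. 1 \<le> Nv x \<omega> \<and> 1 < Gam x \<omega>"
    using GW p0 Gam_gt1 by (rule GW_tree_AE_offspring_marks)
  then have "AE \<omega> in M. 1 \<le> S_tree (\<lambda>x. Nv x \<omega>) (\<lambda>x. Gam x \<omega>)"
    by (auto elim!: eventually_mono intro: S_tree_ge_1)
  note kappa = kappa_bounds[OF prob_space_axioms this]
  define L where "L \<omega> = ennreal (- ln (1 - 1 / Gam [] \<omega>))" for \<omega>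
  define K where "K \<omega> = kappa M Nv Gam (phi_tree (\<lambda>x. Nv x \<omega>) (\<lambda>x. Gam x \<omega>))" for \<omega>
  have "AE \<omega> in M. 1 \<le> K \<omega> \<and> L \<omega> * K \<omega> \<le> L \<omega> + 1"
  proof (rule eventually_mono[OF regular])
    fix \<omega>
    assume "\<forall>x. 1 \<le> Nv x \<omega> \<and> 1 < Gam x \<omega>"
    then have "1 \<le> phi_tree (\<lambda>x. Nv x \<omega>) (\<lambda>x. Gam x \<omega>)"
      and "phi_tree (\<lambda>x. Nv x \<omega>) (\<lambda>x. Gam x \<omega>) \<le> Gam [] \<omega>" and "1 < Gam [] \<omega>"
      using phi_tree_bounds[of "\<lambda>x. Nv x \<omega>" "\<lambda>x. Gam x \<omega>"] by auto
    then show "1 \<le> K \<omega> \<and> L \<omega> * K \<omega> \<le> L \<omega> + 1"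
      using kappa order_trans[OF kappa(2) ennreal_leI] unfolding K_def L_def
      by (auto intro: ennreal_neg_ln_one_minus_inverse_mult_le)
  qed
  moreover have "Gam [] \<in> borel_measurable M"
    using measurable_compose[OF GW_tree_measurable[OF GW] measurable_snd] by simp
  then have "L \<in> borel_measurable M"
    unfolding L_def by measurable
  ultimately show ?thesis
    using nn_integral_mult_finite_iff[of L K] unfolding L_def K_def by auto
qed

end
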